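(* Let $b_0>0$. There exists $\delta_{11}(b_0)>0$ such that for all $\delta\in(0,\delta_{11})$ there exists $s_{11}(\delta,b_0)\ge1$ such that for all $s_0\ge s_{11}$: if $(q,b)(s)\in V_{\delta,b_0}(s)$ for all $s\in[s_0,\bar s]$, then for all $s\in[s_0,\bar s]$ and $y\in\mathbb R$, $$|P_-(\mathcal M(q))(y,s)|\le CI(s)^{-\delta}\big(I(s)^{-M}+|y|^M\big),$$ where $\mathcal M(q)=\frac p{p-1}y^{2k}(1+e_bq)$ with $b=b(s)$ and $C$ is independent of $s,y,s_0$.
   Context: Fix $p>1$ and an integer $k\ge2$. Let $I(s)=e^{\frac s2(1-\frac1k)}$, $M=\frac{2kp}{p-1}$, $[M]$ the largest integer less than $M$, $e_b(y)=(p-1+by^{2k})^{-1}$. Let $\rho_s(y)=\frac{I(s)}{\sqrt{4\pi}}e^{-I(s)^2y^2/4}$, $\langle f,g\rangle_{L^2_{\rho_s}}=\int fg\rho_s\,dy$, $H_m(y,s)=\sum_{\ell=0}^{[m/2]}\frac{m!}{\ell!(m-2\ell)!}(-I(s)^{-2})^\ell y^{m-2\ell}$; $P_m(g)=\langle g,H_m\rangle_{L^2_{\rho_s}}/\langle H_m,H_m\rangle_{L^2_{\rho_s}}$, $P_-(g)=g-\sum_{m=0}^{[M]}P_m(g)H_m$, $q_m=P_m(q)$, $q_-=P_-(q)$, $|g|_s=\sup_y\frac{|g(y)|}{I(s)^{-M}+|y|^M}$. The shrinking set $V_{\delta,b_0}(s)$ is the set of pairs $(q,b)$ ($q$ with $(1+|y|^M)^{-1}q\in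 L^\infty$, $b\in\mathbb R$) with $|q_m|\le I(s)^{-\delta}$ for $0\le m\le[M]$, $m\ne2k$; $|q_{2k}|\le I(s)^{-2\delta}$; $|q_-|_s\le I(s)^{-\delta}$; and $\frac{b_0}2\le b\le2b_0$. *)

theory Defs
  imports "HOL-Analysis.Analysis"
begin

definition Ifun :: "nat \<Rightarrow> real \<Rightarrow> real" where
  "Ifun k s = exp (s / 2 * (1 - 1 / real k))"

definition Mexp :: "real \<Rightarrow> nat \<Rightarrow> real" where
  "Mexp p k = 2 * real k * p / (p - 1)"

text \<open>[M]: the largest integer strictly less than M (M > 0 here).\<close>
definition Mfloor :: "real \<Rightarrow> nat \<Rightarrow> nat" where
  "Mfloor p k = nat (\<lceil>Mexp p k\<rceil> - 1)"

definition e_b :: "real \<Rightarrow> nat \<Rightarrow> real \<Rightarrow> real \<Rightarrow> real" where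
  "e_b p k b y = 1 / (p - 1 + b * y ^ (2 * k))"

definition rho :: "nat \<Rightarrow> real \<Rightarrow> real \<Rightarrow> real" where
  "rho k s y = Ifun k s / sqrt (4 * pi) * exp (- (Ifun k s)\<^sup>2 * y\<^sup>2 / 4)"

definition inner_rho :: "nat \<Rightarrow> real \<Rightarrow> (real \<Rightarrow> real) \<Rightarrow> (real \<Rightarrow> real) \<Rightarrow> real" where
  "inner_rho k s f g = (LINT y|lborel. f y * g y * rho k s y)"

definition Hpoly :: "nat \<Rightarrow> nat \<Rightarrow> real \<Rightarrow> real \<Rightarrow> real" where
  "Hpoly k m s y = (\<Sum>l = 0..m div 2.
      fact m / (fact l * fact (m - 2 * l)) * (- 1 / (Ifun k s)\<^sup>2) ^ l * y ^ (m - 2 * l))"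

definition Pm :: "nat \<Rightarrow> nat \<Rightarrow> real \<Rightarrow> (real \<Rightarrow> real) \<Rightarrow> real" where
  "Pm k m s g = inner_rho k s g (Hpoly k m s) / inner_rho k s (Hpoly k m s) (Hpoly k m s)"

definition Pminus :: "real \<Rightarrow> nat \<Rightarrow> real \<Rightarrow> (real \<Rightarrow> real) \<Rightarrow> real \<Rightarrow> real" where
  "Pminus p k s g y = g y - (\<Sum>m = 0..Mfloor p k. Pm k m s g * Hpoly k m s y)"

definition wnorm :: "real \<Rightarrow> nat \<Rightarrow> real \<Rightarrow> (real \<Rightarrow> real) \<Rightarrow> ereal" where
  "wnorm p k s g = (SUP y. ereal (\<bar>g y\<bar> / (Ifun k s powr (- Mexp p k) + \<bar>y\<bar> powr Mexp p k)))"

definition admissible :: "real \<Rightarrow> nat \<Rightarrow> (real \<Rightarrow> real) \<Rightarrow> bool" where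
  "admissible p k q \<longleftrightarrow> q \<in> borel_measurable lborel \<and>
     (\<exists>K. AE y in lborel. \<bar>q y\<bar> / (1 + \<bar>y\<bar> powr Mexp p k) \<le> K)"

definition Vset :: "real \<Rightarrow> nat \<Rightarrow> real \<Rightarrow> real \<Rightarrow> real \<Rightarrow> ((real \<Rightarrow> real) \<times> real) set" where
  "Vset p k \<delta> b0 s = {(q, b). admissible p k q \<and>
     (\<forall>m \<le> Mfloor p k. m \<noteq> 2 * k \<longrightarrow> \<bar>Pm k m s q\<bar> \<le> Ifun k s powr (- \<delta>)) \<and>
     \<bar>Pm k (2 * k) s q\<bar> \<le> Ifun k s powr (- 2 * \<delta>) \<and>
     wnorm p k s (Pminus p k s q) \<le> ereal (Ifun k s powr (- \<delta>)) \<and>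
     b0 / 2 \<le> b \<and> b \<le> 2 * b0}"

definition Mcal :: "real \<Rightarrow> nat \<Rightarrow> real \<Rightarrow> (real \<Rightarrow> real) \<Rightarrow> real \<Rightarrow> real" where
  "Mcal p k b q y = p / (p - 1) * y ^ (2 * k) * (1 + e_b p k b y * q y)"

end

theory Submission
  imports Defs "HOL-Probability.Probability" "HOL-Computational_Algebra.Polynomial"
begin

text \<open>\<open>\<rho>\<^sub>s\<close> is the density of \<open>N(0, 2 I(s)\<^sup>-\<^sup>2)\<close> and the \<open>H\<^sub>m\<close> are its orthogonal Hermite
  polynomials, so \<open>P\<^sub>-\<close> annihilates every polynomial of degree \<open>\<le> [M]\<close>. Writing
  \<open>q = q\<^sub>- + \<Sum> q\<^sub>m H\<^sub>m\<close> and expanding \<open>y\<^sup>2\<^sup>k e\<^sub>b(y)\<close> as a finite geometric series in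
  \<open>b y\<^sup>2\<^sup>k/(p-1)\<close> with remainder, \<open>\<M>(q)\<close> becomes such a polynomial plus a function of
  size \<open>O(I\<^sup>-\<^sup>\<delta> (I\<^sup>-\<^sup>M + |y|\<^sup>M))\<close>: the modes and \<open>q\<^sub>-\<close> are \<open>O(I\<^sup>-\<^sup>\<delta>)\<close> in \<open>V\<^sub>\<delta>\<^sub>,\<^sub>b\<^sub>0\<close>, and the
  remainder order is chosen so that \<open>y\<^sup>2\<^sup>k\<^sup>J\<^sup>+\<^sup>m\<close> stays below \<open>|y|\<^sup>M\<close>. Finally \<open>P\<^sub>-\<close> maps functions
  of weighted size \<open>A\<close> to functions of weighted size \<open>O(A)\<close>, by explicit Gaussian moments.\<close>

section \<open>Gaussian expectations of polynomials\<close>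

definition gauss_moment :: "real \<Rightarrow> nat \<Rightarrow> real" where
  "gauss_moment \<sigma> n = (LINT x|lborel. normal_density 0 \<sigma> x * x ^ n)"

lemma integrable_gauss_moment:
  "0 < \<sigma> \<Longrightarrow> integrable lborel (\<lambda>x. normal_density 0 \<sigma> x * x ^ n)"
  using integrable_normal_moment[of \<sigma> 0 n] by simp

lemma gauss_moment_even:
  "0 < \<sigma> \<Longrightarrow> gauss_moment \<sigma> (2 * j) = fact (2 * j) / ((2 / \<sigma>\<^sup>2) ^ j * fact j)"
  unfolding gauss_moment_def using integral_normal_moment_even[of \<sigma> 0 j] by simp

lemma gauss_moment_odd: "0 < \<sigma> \<Longrightarrow> gauss_moment \<sigma> (2 * j + 1) = 0"
  unfolding gauss_moment_def using integral_normal_moment_odd[of \<sigma> 0 j] by simp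

lemma gauss_moment_0: "0 < \<sigma> \<Longrightarrow> gauss_moment \<sigma> 0 = 1"
  using gauss_moment_even[of \<sigma> 0] by simp

lemma gauss_moment_Suc_Suc:
  assumes "0 < \<sigma>"
  shows "gauss_moment \<sigma> (Suc (Suc n)) = \<sigma>\<^sup>2 * real (Suc n) * gauss_moment \<sigma> n"
proof (cases "even n")
  case True
  then obtain j where n: "n = 2 * j" by (auto elim: evenE)
  have e: "Suc (Suc n) = 2 * Suc j" using n by simp
  show ?thesis unfolding e unfolding n gauss_moment_even[OF assms] using assms
    by (simp add: fact_Suc field_simps power_Suc del: of_nat_Suc) (simp add: algebra_simps)
next
  case False
  then obtain j where n: "n = 2 * j + 1" by (auto elim: oddE)
  have e: "Suc (Suc n) = 2 * Suc j + 1" using n by simp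
  show ?thesis unfolding e unfolding n gauss_moment_odd[OF assms] by simp
qed

definition gauss_expect :: "real \<Rightarrow> real poly \<Rightarrow> real" where
  "gauss_expect \<sigma> p = (LINT x|lborel. poly p x * normal_density 0 \<sigma> x)"

lemma integrable_poly_normal_density:
  assumes "0 < \<sigma>"
  shows "integrable lborel (\<lambda>x. poly p x * normal_density 0 \<sigma> x)"
proof -
  have "(\<lambda>x. poly p x * normal_density 0 \<sigma> x)
      = (\<lambda>x. \<Sum>i\<le>degree p. coeff p i * (normal_density 0 \<sigma> x * x ^ i))"
    by (auto simp: poly_altdef sum_distrib_right sum_distrib_left ac_simps)
  then show ?thesis
    using integrable_gauss_moment[OF assms] by simp
qed

lemma gauss_expect_0 [simp]: "gauss_expect \<sigma> 0 = 0"
  unfolding gauss_expect_def by simp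

lemma gauss_expect_add:
  "0 < \<sigma> \<Longrightarrow> gauss_expect \<sigma> (p + q) = gauss_expect \<sigma> p + gauss_expect \<sigma> q"
  unfolding gauss_expect_def
  using integrable_poly_normal_density[of \<sigma> p] integrable_poly_normal_density[of \<sigma> q]
  by (simp add: distrib_right)

lemma gauss_expect_smult: "gauss_expect \<sigma> (smult c p) = c * gauss_expect \<sigma> p"
  unfolding gauss_expect_def by (simp add: mult.assoc)

lemma gauss_expect_sum:
  "0 < \<sigma> \<Longrightarrow> gauss_expect \<sigma> (\<Sum>i\<in>A. f i) = (\<Sum>i\<in>A. gauss_expect \<sigma> (f i))"
  by (induction A rule: infinite_finite_induct) (simp_all add: gauss_expect_add)

lemma gauss_expect_monom: "gauss_expect \<sigma> (monom c n) = c * gauss_moment \<sigma> n"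
  unfolding gauss_expect_def gauss_moment_def by (simp add: poly_monom ac_simps)

lemma gauss_expect_const: "0 < \<sigma> \<Longrightarrow> gauss_expect \<sigma> [:c:] = c"
  using gauss_expect_monom[of \<sigma> c 0] gauss_moment_0[of \<sigma>] by (simp add: monom_0)

lemma pCons_0_sum: "pCons 0 (\<Sum>i\<in>A. f i) = (\<Sum>i\<in>A. pCons 0 (f i))"
  by (induction A rule: infinite_finite_induct) (auto, metis add_pCons add_0)

text \<open>Stein's identity \<open>E[X p(X)] = \<sigma>\<^sup>2 E[p'(X)]\<close>; it holds on monomials by the moment recursion.\<close>

lemma gauss_expect_pCons_0:
  assumes "0 < \<sigma>"
  shows "gauss_expect \<sigma> (pCons 0 p) = \<sigma>\<^sup>2 * gauss_expect \<sigma> (pderiv p)"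
proof -
  have monom: "gauss_expect \<sigma> (pCons 0 (monom c i)) = \<sigma>\<^sup>2 * gauss_expect \<sigma> (pderiv (monom c i))"
    for c i
  proof (cases i)
    case 0
    then show ?thesis
      using gauss_moment_odd[OF assms, of 0]
      by (simp add: monom_Suc[symmetric] gauss_expect_monom pderiv_monom)
  next
    case (Suc j)
    then show ?thesis
      using gauss_moment_Suc_Suc[OF assms, of j]
      by (simp add: monom_Suc[symmetric] gauss_expect_monom pderiv_monom)
  qed
  have "gauss_expect \<sigma> (pCons 0 p) = gauss_expect \<sigma> (pCons 0 (\<Sum>i\<le>degree p. monom (coeff p i) i))"
    by (simp add: poly_as_sum_of_monoms)
  also have "\<dots> = (\<Sum>i\<le>degree p. \<sigma>\<^sup>2 * gauss_expect \<sigma> (pderiv (monom (coeff p i) i)))"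
    by (simp add: pCons_0_sum gauss_expect_sum[OF assms] monom)
  also have "\<dots> = \<sigma>\<^sup>2 * gauss_expect \<sigma> (pderiv (\<Sum>i\<le>degree p. monom (coeff p i) i))"
    by (simp add: higher_pderiv_sum[of 1, simplified] gauss_expect_sum[OF assms] sum_distrib_left)
  finally show ?thesis by (simp add: poly_as_sum_of_monoms)
qed

section \<open>Hermite polynomials\<close>

text \<open>With \<open>a = -\<sigma>\<^sup>2/2\<close> these are the Hermite polynomials orthogonal for \<open>N(0,\<sigma>\<^sup>2)\<close>;
  \<open>Hpoly\<close> is the case \<open>a = -I(s)\<^sup>-\<^sup>2\<close>.\<close>

definition hermite :: "real \<Rightarrow> nat \<Rightarrow> real poly" where
  "hermite a m = (\<Sum>l = 0..m div 2. monom (fact m / (fact l * fact (m - 2 * l)) * a ^ l) (m - 2 * l))"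

definition hermite_coeff :: "real \<Rightarrow> nat \<Rightarrow> nat \<Rightarrow> real" where
  "hermite_coeff a m n = (if n \<le> m \<and> even (m - n)
     then fact m / (fact ((m - n) div 2) * fact n) * a ^ ((m - n) div 2) else 0)"

lemma coeff_hermite: "coeff (hermite a m) n = hermite_coeff a m n"
proof -
  have "coeff (hermite a m) n = (\<Sum>l = 0..m div 2. if l = (m - n) div 2 \<and> n \<le> m \<and> even (m - n)
          then fact m / (fact l * fact (m - 2 * l)) * a ^ l else 0)"
    unfolding hermite_def coeff_sum coeff_monom
  proof (rule sum.cong[OF refl])
    fix l assume "l \<in> {0..m div 2}"
    then have lm: "2 * l \<le> m" by auto
    have "(m - 2 * l = n) = (l = (m - n) div 2 \<and> n \<le> m \<and> even (m - n))"
    proof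
      assume "m - 2 * l = n"
      then have "m - n = 2 * l" "n \<le> m" using lm by linarith+
      then show "l = (m - n) div 2 \<and> n \<le> m \<and> even (m - n)" by simp
    next
      assume h: "l = (m - n) div 2 \<and> n \<le> m \<and> even (m - n)"
      then have "2 * l = m - n" using even_two_times_div_two[of "m - n"] by blast
      then show "m - 2 * l = n" using h by linarith
    qed
    then show "(if m - 2 * l = n then fact m / (fact l * fact (m - 2 * l)) * a ^ l else 0) =
          (if l = (m - n) div 2 \<and> n \<le> m \<and> even (m - n)
           then fact m / (fact l * fact (m - 2 * l)) * a ^ l else 0)"
      by simp
  qed
  also have "\<dots> = hermite_coeff a m n"
  proof (cases "n \<le> m \<and> even (m - n)")
    case True
    then have "(m - n) div 2 \<in> {0..m div 2}" by (auto intro: div_le_mono)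
    moreover have "m - 2 * ((m - n) div 2) = n" using True by (auto elim!: evenE)
    ultimately show ?thesis using True unfolding hermite_coeff_def
      by (simp add: sum.delta' del: One_nat_def)
  next
    case False
    then have "hermite_coeff a m n = 0" unfolding hermite_coeff_def by (rule if_not_P)
    moreover have "(\<Sum>l = 0..m div 2. if l = (m - n) div 2 \<and> n \<le> m \<and> even (m - n)
          then fact m / (fact l * fact (m - 2 * l)) * a ^ l else 0) = 0"
      using False by (intro sum.neutral ballI if_not_P) blast
    ultimately show ?thesis by simp
  qed
  finally show ?thesis .
qed

lemma hermite_coeff_Suc:
  "hermite_coeff a (Suc m) n
     = (if n = 0 then 0 else hermite_coeff a m (n - 1)) + 2 * a * real (Suc n) * hermite_coeff a m (Suc n)"
proof (cases "n \<le> Suc m \<and> even (Suc m - n)")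
  case False
  then show ?thesis unfolding hermite_coeff_def
    by (cases n) (auto simp: le_Suc_eq)
next
  case True
  then have "even (Suc m - n)" by (rule conjunct2)
  then obtain l0 where "Suc m - n = 2 * l0" by (erule evenE)
  then have ml: "Suc m = n + 2 * l0" using True by linarith
  have fl: "fact l > (0::real)" "fact n' > (0::real)" for l n' by auto
  show ?thesis
  proof (cases n)
    case 0
    then obtain l where "l0 = Suc l" using ml by (cases l0) auto
    then have "m = 2 * l + 1" using ml 0 by simp
    then show ?thesis unfolding hermite_coeff_def using 0 fl
      by (simp add: fact_Suc divide_simps)
  next
    case (Suc n')
    show ?thesis
    proof (cases l0)
      case 0
      then show ?thesis unfolding hermite_coeff_def using Suc ml by simp
    next
      case (Suc l)
      then have m: "m = n' + 2 * l + 2" using ml \<open>n = Suc n'\<close> by simp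
      have "Suc m = n' + 2 * l + 3" using m by simp
      then show ?thesis unfolding hermite_coeff_def \<open>n = Suc n'\<close> using m fl
        by (simp add: fact_Suc numeral_3_eq_3 divide_simps) (simp add: algebra_simps)
    qed
  qed
qed

lemma hermite_Suc: "hermite a (Suc m) = pCons 0 (hermite a m) + smult (2 * a) (pderiv (hermite a m))"
  by (rule poly_eqI)
    (simp add: coeff_hermite coeff_pCons' coeff_pderiv hermite_coeff_Suc del: of_nat_Suc)

lemma hermite_0 [simp]: "hermite a 0 = 1"
  unfolding hermite_def by simp

lemma coeff_hermite_self [simp]: "coeff (hermite a m) m = 1"
  by (simp add: coeff_hermite hermite_coeff_def)

lemma degree_hermite [simp]: "degree (hermite a m) = m"
proof (rule antisym)
  show "degree (hermite a m) \<le> m" by (rule degree_le) (simp add: coeff_hermite hermite_coeff_def)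
  show "m \<le> degree (hermite a m)" by (rule le_degree) simp
qed

text \<open>Repeated Gaussian integration by parts: \<open>E[H\<^sub>m g] = \<sigma>\<^sup>2\<^sup>m E[g\<^sup>(\<^sup>m\<^sup>)]\<close>.\<close>

lemma gauss_expect_hermite_mult:
  assumes s: "0 < \<sigma>" and a: "a = - \<sigma>\<^sup>2 / 2"
  shows "degree g \<le> m \<Longrightarrow> gauss_expect \<sigma> (hermite a m * g) = (\<sigma>\<^sup>2) ^ m * fact m * coeff g m"
proof (induction m arbitrary: g)
  case 0
  then have "[: coeff g 0 :] = g" by (intro degree_0_id) simp
  then show ?case using gauss_expect_const[OF s] by (metis hermite_0 mult_1 power_0 fact_0 mult_1_right)
next
  case (Suc m)
  let ?h = "hermite a m"
  have "hermite a (Suc m) * g = pCons 0 (?h * g) + smult (2 * a) (pderiv ?h * g)"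
    by (simp add: hermite_Suc algebra_simps)
  then have "gauss_expect \<sigma> (hermite a (Suc m) * g)
      = \<sigma>\<^sup>2 * gauss_expect \<sigma> (pderiv (?h * g)) + 2 * a * gauss_expect \<sigma> (pderiv ?h * g)"
    by (simp add: gauss_expect_add[OF s] gauss_expect_smult gauss_expect_pCons_0[OF s])
  also have "\<dots> = \<sigma>\<^sup>2 * gauss_expect \<sigma> (?h * pderiv g)"
    by (simp add: pderiv_mult gauss_expect_add[OF s] a algebra_simps)
  also have "\<dots> = \<sigma>\<^sup>2 * ((\<sigma>\<^sup>2) ^ m * fact m * coeff (pderiv g) m)"
    using Suc.prems by (subst Suc.IH) (auto simp: degree_pderiv)
  also have "\<dots> = (\<sigma>\<^sup>2) ^ Suc m * fact (Suc m) * coeff g (Suc m)"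
    by (simp add: coeff_pderiv fact_Suc algebra_simps del: of_nat_Suc)
  finally show ?case .
qed

lemma gauss_expect_hermite_hermite:
  assumes s: "0 < \<sigma>" and a: "a = - \<sigma>\<^sup>2 / 2"
  shows "gauss_expect \<sigma> (hermite a j * hermite a m) = (if j = m then (\<sigma>\<^sup>2) ^ m * fact m else 0)"
proof (cases "j \<le> m")
  case True
  then have "gauss_expect \<sigma> (hermite a j * hermite a m) = (\<sigma>\<^sup>2) ^ m * fact m * coeff (hermite a j) m"
    using gauss_expect_hermite_mult[OF s a, of "hermite a j" m] by (simp add: ac_simps)
  then show ?thesis using True by (auto simp: coeff_eq_0)
next
  case False
  then have "gauss_expect \<sigma> (hermite a j * hermite a m) = (\<sigma>\<^sup>2) ^ j * fact j * coeff (hermite a m) j"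
    by (intro gauss_expect_hermite_mult[OF s a]) simp
  then show ?thesis using False by (auto simp: coeff_eq_0)
qed

lemma hermite_spanning:
  "degree g \<le> n \<Longrightarrow> \<exists>c. g = (\<Sum>j\<le>n. smult (c j) (hermite a j))"
proof (induction n arbitrary: g)
  case 0
  then have "[: coeff g 0 :] = g" by (intro degree_0_id) simp
  then have "g = smult (coeff g 0) (hermite a 0)" by simp
  then show ?case by auto
next
  case (Suc n)
  define g' where "g' = g - smult (coeff g (Suc n)) (hermite a (Suc n))"
  have "degree g' \<le> n"
  proof (rule degree_le, intro allI impI)
    fix i assume "n < i"
    then consider "i = Suc n" | "i > Suc n" by linarith
    then show "coeff g' i = 0"
      by cases (use Suc.prems in \<open>simp_all add: g'_def coeff_eq_0\<close>)
  qed
  then obtain c where c: "g' = (\<Sum>j\<le>n. smult (c j) (hermite a j))" using Suc.IH by blast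
  have "g = g' + smult (coeff g (Suc n)) (hermite a (Suc n))" by (simp add: g'_def)
  also have "\<dots> = (\<Sum>j\<le>Suc n. smult ((c(Suc n := coeff g (Suc n))) j) (hermite a j))"
    unfolding c by (simp add: atMost_Suc)
  finally show ?case by blast
qed

lemma hermite_expansion:
  assumes s: "0 < \<sigma>" and a: "a = - \<sigma>\<^sup>2 / 2" and dg: "degree g \<le> n"
  shows "(\<Sum>m\<le>n. gauss_expect \<sigma> (g * hermite a m) / gauss_expect \<sigma> (hermite a m * hermite a m)
            * poly (hermite a m) x) = poly g x"
proof -
  obtain c where c: "g = (\<Sum>j\<le>n. smult (c j) (hermite a j))" using hermite_spanning[OF dg] by blast
  have nz: "(\<sigma>\<^sup>2) ^ m * fact m \<noteq> 0" for m using s by simp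
  have "gauss_expect \<sigma> (g * hermite a m) = c m * ((\<sigma>\<^sup>2) ^ m * fact m)" if m: "m \<le> n" for m
  proof -
    have "gauss_expect \<sigma> (g * hermite a m) = (\<Sum>j\<le>n. c j * gauss_expect \<sigma> (hermite a j * hermite a m))"
      unfolding c by (simp add: sum_distrib_right gauss_expect_sum[OF s] gauss_expect_smult)
    also have "\<dots> = c m * ((\<sigma>\<^sup>2) ^ m * fact m)"
      using m by (simp add: gauss_expect_hermite_hermite[OF s a] if_distrib sum.delta cong: if_cong)
    finally show ?thesis .
  qed
  then have "(\<Sum>m\<le>n. gauss_expect \<sigma> (g * hermite a m) / gauss_expect \<sigma> (hermite a m * hermite a m)
         * poly (hermite a m) x) = (\<Sum>m\<le>n. c m * poly (hermite a m) x)"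
    using nz by (intro sum.cong) (auto simp: gauss_expect_hermite_hermite[OF s a])
  also have "\<dots> = poly g x" unfolding c by (simp add: poly_sum)
  finally show ?thesis .
qed

section \<open>The Gaussian weight \<open>\<rho>\<^sub>s\<close> and the projections\<close>

definition gauss_sigma :: "nat \<Rightarrow> real \<Rightarrow> real" where
  "gauss_sigma k s = sqrt 2 / Ifun k s"

definition hermite_param :: "nat \<Rightarrow> real \<Rightarrow> real" where
  "hermite_param k s = - 1 / (Ifun k s)\<^sup>2"

lemma Ifun_pos: "0 < Ifun k s"
  by (simp add: Ifun_def)

lemma one_le_Ifun: "0 \<le> s \<Longrightarrow> 1 \<le> k \<Longrightarrow> 1 \<le> Ifun k s"
  unfolding Ifun_def by (simp add: divide_le_eq_1)

lemma gauss_sigma_pos: "0 < gauss_sigma k s"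
  by (simp add: gauss_sigma_def Ifun_pos)

lemma gauss_sigma_sq: "(gauss_sigma k s)\<^sup>2 = 2 * (1 / Ifun k s)\<^sup>2"
  by (simp add: gauss_sigma_def power_divide)

lemma hermite_param_eq_sigma: "hermite_param k s = - (gauss_sigma k s)\<^sup>2 / 2"
  by (simp add: hermite_param_def gauss_sigma_def power_divide)

lemma hermite_param_eq: "hermite_param k s = - ((1 / Ifun k s)\<^sup>2)"
  by (simp add: hermite_param_def power_divide)

lemma rho_eq_normal_density: "rho k s y = normal_density 0 (gauss_sigma k s) y"
proof -
  have I: "Ifun k s > 0" by (rule Ifun_pos)
  have "sqrt (2 * pi * (sqrt 2 / Ifun k s)\<^sup>2) = sqrt (4 * pi) / Ifun k s"
    using I by (simp add: power_divide real_sqrt_divide real_sqrt_mult)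
  moreover have "- y\<^sup>2 / (2 * (sqrt 2 / Ifun k s)\<^sup>2) = - (Ifun k s)\<^sup>2 * y\<^sup>2 / 4"
    using I by (simp add: power_divide field_simps)
  ultimately show ?thesis unfolding rho_def normal_density_def gauss_sigma_def
    using I by (simp add: field_simps)
qed

lemma Hpoly_eq_hermite: "Hpoly k m s = poly (hermite (hermite_param k s) m)"
  unfolding Hpoly_def hermite_def hermite_param_def by (simp add: fun_eq_iff poly_sum poly_monom)

lemma inner_rho_poly: "inner_rho k s (poly g) (poly h) = gauss_expect (gauss_sigma k s) (g * h)"
  unfolding inner_rho_def gauss_expect_def rho_eq_normal_density by simp

lemma Pminus_poly_eq_0:
  assumes "degree g \<le> Mfloor p k"
  shows "Pminus p k s (poly g) y = 0"
  using hermite_expansion[OF gauss_sigma_pos hermite_param_eq_sigma assms, where x = y]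
  unfolding Pminus_def Pm_def Hpoly_eq_hermite inner_rho_poly
  by (simp add: atLeast0AtMost)

lemma Pminus_add:
  assumes "\<And>m. m \<le> Mfloor p k \<Longrightarrow> integrable lborel (\<lambda>y. f y * Hpoly k m s y * rho k s y)"
      and "\<And>m. m \<le> Mfloor p k \<Longrightarrow> integrable lborel (\<lambda>y. g y * Hpoly k m s y * rho k s y)"
  shows "Pminus p k s (\<lambda>y. f y + g y) x = Pminus p k s f x + Pminus p k s g x"
proof -
  have "Pm k m s (\<lambda>y. f y + g y) = Pm k m s f + Pm k m s g" if "m \<le> Mfloor p k" for m
    unfolding Pm_def inner_rho_def using assms[OF that]
    by (simp add: distrib_right add_divide_distrib)
  then show ?thesis
    unfolding Pminus_def by (simp add: distrib_right sum.distrib)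
qed

lemma integrable_poly_Hpoly_rho: "integrable lborel (\<lambda>y. poly g y * Hpoly k m s y * rho k s y)"
  using integrable_poly_normal_density[OF gauss_sigma_pos, of "g * hermite (hermite_param k s) m" k s]
  by (simp add: Hpoly_eq_hermite rho_eq_normal_density mult.assoc)

section \<open>Growth estimates\<close>

lemma powr_mult_powr_le:
  fixes e x a b :: real
  assumes "0 < e" "0 \<le> x" "0 \<le> a" "0 \<le> b"
  shows "e powr a * x powr b \<le> e powr (a + b) + x powr (a + b)"
proof (cases "x \<le> e")
  case True
  have "x powr b \<le> e powr b" using True assms by (intro powr_mono2) auto
  then have "e powr a * x powr b \<le> e powr (a + b)"
    by (simp add: powr_add mult_left_mono)
  then show ?thesis using powr_ge_zero[of x "a + b"] by linarith
next
  case False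
  have "e powr a \<le> x powr a" using False assms by (intro powr_mono2) auto
  then have "e powr a * x powr b \<le> x powr (a + b)"
    by (simp add: powr_add mult_right_mono)
  then show ?thesis using powr_ge_zero[of e "a + b"] by linarith
qed

lemma powr_mult_power_le:
  fixes e x a :: real
  assumes "0 < e" "0 \<le> x" "0 \<le> a"
  shows "e powr a * x ^ n \<le> e powr (a + n) + x powr (a + n)"
proof (cases "x = 0")
  case True
  then show ?thesis using assms by (cases n) auto
next
  case False
  then have "x ^ n = x powr n" using assms by (simp add: powr_realpow)
  then show ?thesis using powr_mult_powr_le[OF assms, of n] by simp
qed

lemma powr_mult_powr_le_interpolate:
  fixes e x a b c :: real
  assumes "0 < e" "0 \<le> x" "0 \<le> b" "b \<le> c"
  shows "e powr a * x powr b \<le> e powr (a + b) + e powr (a + b - c) * x powr c"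
proof (cases "x \<le> e")
  case True
  have "x powr b \<le> e powr b" using True assms by (intro powr_mono2) auto
  then have "e powr a * x powr b \<le> e powr (a + b)"
    by (simp add: powr_add mult_left_mono)
  moreover have "0 \<le> e powr (a + b - c) * x powr c" by simp
  ultimately show ?thesis by linarith
next
  case False
  then have "x powr (b - c) \<le> e powr (b - c)" using assms by (intro powr_mono2') auto
  then have "x powr c * x powr (b - c) \<le> x powr c * e powr (b - c)" by (intro mult_left_mono) auto
  then have "x powr b \<le> x powr c * e powr (b - c)" by (simp add: powr_add[symmetric])
  then have "e powr a * x powr b \<le> e powr a * (x powr c * e powr (b - c))"
    by (intro mult_left_mono) auto
  also have "\<dots> = e powr (a + b - c) * x powr c"
    by (simp add: powr_add[symmetric] algebra_simps)
  finally have "e powr a * x powr b \<le> e powr (a + b - c) * x powr c" .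
  then show ?thesis using powr_ge_zero[of e "a + b"] by linarith
qed

definition hermite_abs_coeff_sum :: "nat \<Rightarrow> real" where
  "hermite_abs_coeff_sum m = (\<Sum>l = 0..m div 2. fact m / (fact l * fact (m - 2 * l)))"

lemma hermite_abs_coeff_sum_nonneg: "0 \<le> hermite_abs_coeff_sum m"
  unfolding hermite_abs_coeff_sum_def by (intro sum_nonneg) auto

lemma abs_poly_hermite_le:
  assumes e: "0 < e"
  shows "\<bar>poly (hermite (- (e\<^sup>2)) m) y\<bar> \<le> hermite_abs_coeff_sum m * (e powr m + \<bar>y\<bar> powr m)"
proof -
  let ?c = "\<lambda>l. fact m / (fact l * fact (m - 2 * l)) :: real"
  have summand: "\<bar>?c l * (- (e\<^sup>2)) ^ l * y ^ (m - 2 * l)\<bar> \<le> ?c l * (e powr m + \<bar>y\<bar> powr m)"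
    if "l \<in> {0..m div 2}" for l
  proof -
    from that have lm: "2 * l \<le> m" by auto
    have "e powr (real (2 * l)) = (e\<^sup>2) ^ l"
      using e by (subst powr_realpow) (simp_all add: power_mult)
    then have "\<bar>(- (e\<^sup>2)) ^ l * y ^ (m - 2 * l)\<bar> = e powr (real (2 * l)) * \<bar>y\<bar> ^ (m - 2 * l)"
      by (simp add: abs_mult power_abs)
    also have "\<dots> \<le> e powr (real (2 * l) + real (m - 2 * l)) + \<bar>y\<bar> powr (real (2 * l) + real (m - 2 * l))"
      by (rule powr_mult_power_le) (use e in auto)
    also have "real (2 * l) + real (m - 2 * l) = real m" using lm by simp
    finally have "\<bar>(- (e\<^sup>2)) ^ l * y ^ (m - 2 * l)\<bar> \<le> e powr m + \<bar>y\<bar> powr m" .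
    then have "?c l * \<bar>(- (e\<^sup>2)) ^ l * y ^ (m - 2 * l)\<bar> \<le> ?c l * (e powr m + \<bar>y\<bar> powr m)"
      by (rule mult_left_mono) simp
    then show ?thesis by (simp add: abs_mult mult.assoc)
  qed
  have "\<bar>poly (hermite (- (e\<^sup>2)) m) y\<bar> = \<bar>\<Sum>l = 0..m div 2. ?c l * (- (e\<^sup>2)) ^ l * y ^ (m - 2 * l)\<bar>"
    unfolding hermite_def by (simp add: poly_sum poly_monom)
  also have "\<dots> \<le> (\<Sum>l = 0..m div 2. ?c l * (e powr m + \<bar>y\<bar> powr m))"
    by (rule order.trans[OF sum_abs sum_mono]) (rule summand)
  also have "\<dots> = hermite_abs_coeff_sum m * (e powr m + \<bar>y\<bar> powr m)"
    unfolding hermite_abs_coeff_sum_def by (simp add: sum_distrib_right)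
  finally show ?thesis .
qed

lemma abs_Hpoly_le:
  "\<bar>Hpoly k m s y\<bar> \<le> hermite_abs_coeff_sum m * ((1 / Ifun k s) powr m + \<bar>y\<bar> powr m)"
  unfolding Hpoly_eq_hermite hermite_param_eq by (rule abs_poly_hermite_le) (simp add: Ifun_pos)

definition weight :: "real \<Rightarrow> real \<Rightarrow> real \<Rightarrow> real" where
  "weight e M y = e powr M + \<bar>y\<bar> powr M"

lemma weight_pos: "0 < e \<Longrightarrow> 0 < weight e M y"
  unfolding weight_def by (smt (verit) powr_gt_zero powr_ge_zero)

lemma weight_Ifun: "weight (1 / Ifun k s) M y = Ifun k s powr (- M) + \<bar>y\<bar> powr M"
  unfolding weight_def by (simp add: powr_divide powr_minus_divide Ifun_pos less_imp_le)

lemma borel_measurable_Hpoly [measurable]: "Hpoly k m s \<in> borel_measurable borel"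
  unfolding Hpoly_eq_hermite
  by (intro borel_measurable_continuous_onI continuous_on_poly continuous_on_id)

text \<open>The product of the weight with a Hermite-type growth is dominated by a combination of
  \<open>1\<close> and \<open>y\<^sup>2\<^sup>K\<close>, whose Gaussian integrals are explicit.\<close>

lemma weight_mult_le:
  fixes e M y :: real
  assumes e: "0 < e" and M: "0 \<le> M" and K: "M + real m \<le> 2 * real K"
  shows "weight e M y * (e powr m + \<bar>y\<bar> powr m)
           \<le> 4 * (e powr (M + m) + e powr (M + m - 2 * K) * y ^ (2 * K))"
proof -
  let ?bound = "e powr (M + m) + e powr (M + m - 2 * K) * \<bar>y\<bar> powr (2 * real K)"
  have yK: "\<bar>y\<bar> powr (2 * real K) \<le> y ^ (2 * K)"
  proof (cases "y = 0")
    case False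
    then have "\<bar>y\<bar> powr (real (2 * K)) = \<bar>y\<bar> ^ (2 * K)" by (intro powr_realpow) simp
    then show ?thesis by (simp add: power_even_abs)
  qed simp
  have "e powr M * e powr m = e powr (M + m)" by (simp add: powr_add)
  moreover have "e powr M * \<bar>y\<bar> powr m \<le> ?bound"
    using powr_mult_powr_le_interpolate[OF e abs_ge_zero, of m "2 * real K" M] K M by simp
  moreover have "\<bar>y\<bar> powr M * e powr m \<le> ?bound"
    using powr_mult_powr_le_interpolate[OF e abs_ge_zero, of M "2 * real K" m] K M
    by (simp add: ac_simps)
  moreover have "\<bar>y\<bar> powr M * \<bar>y\<bar> powr m \<le> ?bound"
    using powr_mult_powr_le_interpolate[OF e abs_ge_zero, of "M + m" "2 * real K" 0] K M e
    by (simp add: powr_add)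
  moreover have "weight e M y * (e powr m + \<bar>y\<bar> powr m) = e powr M * e powr m
      + e powr M * \<bar>y\<bar> powr m + \<bar>y\<bar> powr M * e powr m + \<bar>y\<bar> powr M * \<bar>y\<bar> powr m"
    unfolding weight_def by (simp add: algebra_simps)
  ultimately have "weight e M y * (e powr m + \<bar>y\<bar> powr m) \<le> 4 * ?bound"
    by (smt (verit) mult_nonneg_nonneg powr_ge_zero)
  also have "\<dots> \<le> 4 * (e powr (M + m) + e powr (M + m - 2 * K) * y ^ (2 * K))"
    using yK by (intro mult_left_mono add_left_mono) auto
  finally show ?thesis .
qed

lemma gauss_moment_gauss_sigma:
  "gauss_moment (gauss_sigma k s) (2 * K) = fact (2 * K) / fact K * (1 / Ifun k s) ^ (2 * K)"
proof -
  have "2 / (gauss_sigma k s)\<^sup>2 = 1 / (1 / Ifun k s) ^ 2"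
    unfolding gauss_sigma_sq by simp
  then show ?thesis
    using gauss_moment_even[OF gauss_sigma_pos, of k s K] Ifun_pos[of k s]
    by (simp add: power_mult power_divide field_simps flip: power_mult_distrib power_mult)
qed

lemma inner_rho_Hpoly_Hpoly:
  "inner_rho k s (Hpoly k m s) (Hpoly k m s) = 2 ^ m * fact m * (1 / Ifun k s) powr (2 * m)"
proof -
  have "inner_rho k s (Hpoly k m s) (Hpoly k m s) = ((gauss_sigma k s)\<^sup>2) ^ m * fact m"
    unfolding Hpoly_eq_hermite inner_rho_poly
    using gauss_expect_hermite_hermite[OF gauss_sigma_pos hermite_param_eq_sigma, of k s m m] by simp
  also have "\<dots> = 2 ^ m * fact m * (1 / Ifun k s) powr (2 * m)"
    unfolding gauss_sigma_sq using powr_realpow[of "1 / Ifun k s" "2 * m"] Ifun_pos[of k s]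
    by (simp add: power_mult_distrib power_mult)
  finally show ?thesis .
qed

definition moment_const :: "nat \<Rightarrow> nat \<Rightarrow> real" where
  "moment_const m K = 4 * hermite_abs_coeff_sum m * (1 + fact (2 * K) / fact K)"

lemma moment_const_nonneg: "0 \<le> moment_const m K"
  unfolding moment_const_def using hermite_abs_coeff_sum_nonneg[of m] by simp

lemma inner_rho_Hpoly_weighted:
  fixes g :: "real \<Rightarrow> real"
  assumes M: "0 \<le> M" and K: "M + real m \<le> 2 * real K"
    and g: "g \<in> borel_measurable lborel" "\<And>y. \<bar>g y\<bar> \<le> A * weight (1 / Ifun k s) M y"
  shows "integrable lborel (\<lambda>y. g y * Hpoly k m s y * rho k s y)"
    and "\<bar>inner_rho k s g (Hpoly k m s)\<bar> \<le> A * moment_const m K * (1 / Ifun k s) powr (M + m)"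
proof -
  define e where "e = 1 / Ifun k s"
  define \<sigma> where "\<sigma> = gauss_sigma k s"
  define Ch where "Ch = hermite_abs_coeff_sum m"
  have e: "0 < e" unfolding e_def using Ifun_pos by simp
  have s: "0 < \<sigma>" unfolding \<sigma>_def by (rule gauss_sigma_pos)
  have Ch: "0 \<le> Ch" unfolding Ch_def by (rule hermite_abs_coeff_sum_nonneg)
  have A: "0 \<le> A" using g(2)[of 0] weight_pos[OF e, of M 0] unfolding e_def
    by (smt (verit) zero_le_mult_iff)
  define bound where "bound y = A * Ch * 4 * (e powr (M + m) * normal_density 0 \<sigma> y
      + e powr (M + m - 2 * K) * (normal_density 0 \<sigma> y * y ^ (2 * K)))" for y
  have bound_int: "integrable lborel bound"
    unfolding bound_def using integrable_gauss_moment[OF s, of "2 * K"] integrable_normal_density[OF s]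
    by (intro integrable_mult_right Bochner_Integration.integrable_add) auto
  have "integral\<^sup>L lborel bound
      = A * Ch * 4 * (e powr (M + m) + e powr (M + m - 2 * K) * gauss_moment \<sigma> (2 * K))"
    unfolding bound_def gauss_moment_def
    using integrable_gauss_moment[OF s, of "2 * K"] integrable_normal_density[OF s] s by simp
  also have "e powr (M + m - 2 * K) * gauss_moment \<sigma> (2 * K) = fact (2 * K) / fact K * e powr (M + m)"
    unfolding \<sigma>_def gauss_moment_gauss_sigma e_def[symmetric] using e
    by (simp add: powr_realpow[symmetric] powr_add[symmetric])
  finally have integral_bound: "integral\<^sup>L lborel bound = A * moment_const m K * e powr (M + m)"
    unfolding moment_const_def Ch_def by (simp add: algebra_simps)
  have dominated: "\<bar>g y * Hpoly k m s y * rho k s y\<bar> \<le> bound y" for y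
  proof -
    have nd: "0 \<le> normal_density 0 \<sigma> y" by simp
    have "\<bar>g y * Hpoly k m s y * rho k s y\<bar> = \<bar>g y\<bar> * \<bar>Hpoly k m s y\<bar> * normal_density 0 \<sigma> y"
      by (simp add: abs_mult rho_eq_normal_density \<sigma>_def)
    also have "\<dots> \<le> (A * weight e M y) * (Ch * (e powr m + \<bar>y\<bar> powr m)) * normal_density 0 \<sigma> y"
      using g(2)[of y] abs_Hpoly_le[of k m s y] nd unfolding e_def Ch_def
      by (intro mult_right_mono mult_mono) auto
    also have "\<dots> = A * Ch * (weight e M y * (e powr m + \<bar>y\<bar> powr m)) * normal_density 0 \<sigma> y"
      by (simp add: ac_simps)
    also have "\<dots> \<le> A * Ch * (4 * (e powr (M + m) + e powr (M + m - 2 * K) * y ^ (2 * K)))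
                    * normal_density 0 \<sigma> y"
      using weight_mult_le[OF e M K, of y] A Ch nd by (intro mult_right_mono mult_left_mono) auto
    also have "\<dots> = bound y" unfolding bound_def by (simp add: algebra_simps)
    finally show ?thesis .
  qed
  have "(\<lambda>y. g y * Hpoly k m s y * rho k s y) \<in> borel_measurable lborel"
    using g(1) unfolding rho_eq_normal_density by measurable
  then show int: "integrable lborel (\<lambda>y. g y * Hpoly k m s y * rho k s y)"
    by (rule Bochner_Integration.integrable_bound[OF bound_int])
      (use dominated in \<open>auto intro!: AE_I2 order.trans[OF _ abs_ge_self]\<close>)
  show "\<bar>inner_rho k s g (Hpoly k m s)\<bar> \<le> A * moment_const m K * (1 / Ifun k s) powr (M + m)"
    unfolding inner_rho_def e_def[symmetric] integral_bound[symmetric]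
    by (rule integral_abs_bound_integral[OF int bound_int]) (rule dominated)
qed

definition proj_const :: "nat \<Rightarrow> nat \<Rightarrow> real" where
  "proj_const m K = 2 * hermite_abs_coeff_sum m * moment_const m K / (2 ^ m * fact m)"

lemma abs_Pm_Hpoly_le:
  fixes g :: "real \<Rightarrow> real"
  assumes M: "0 \<le> M" and mM: "real m \<le> M" and K: "M + real m \<le> 2 * real K"
    and g: "g \<in> borel_measurable lborel" "\<And>y. \<bar>g y\<bar> \<le> A * weight (1 / Ifun k s) M y"
  shows "\<bar>Pm k m s g * Hpoly k m s y\<bar> \<le> proj_const m K * A * weight (1 / Ifun k s) M y"
proof -
  define e where "e = 1 / Ifun k s"
  define Ch where "Ch = hermite_abs_coeff_sum m"
  define B where "B = moment_const m K"
  have e: "0 < e" unfolding e_def using Ifun_pos by simp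
  have A: "0 \<le> A" using g(2)[of 0] weight_pos[OF e, of M 0] unfolding e_def
    by (smt (verit) zero_le_mult_iff)
  have Ch: "0 \<le> Ch" unfolding Ch_def by (rule hermite_abs_coeff_sum_nonneg)
  have B: "0 \<le> B" unfolding B_def by (rule moment_const_nonneg)
  define c where "c = A * B * Ch / (2 ^ m * fact m)"
  have c: "0 \<le> c" unfolding c_def using A B Ch by simp
  have "\<bar>Pm k m s g\<bar> = \<bar>inner_rho k s g (Hpoly k m s)\<bar> / (2 ^ m * fact m * e powr (2 * m))"
    unfolding Pm_def inner_rho_Hpoly_Hpoly e_def by (simp add: abs_divide)
  also have "\<dots> \<le> A * B * e powr (M + m) / (2 ^ m * fact m * e powr (2 * m))"
    using inner_rho_Hpoly_weighted(2)[OF M K g] unfolding B_def e_def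
    by (intro divide_right_mono) auto
  also have "\<dots> = A * B / (2 ^ m * fact m) * (e powr (M + m) / e powr (2 * m))"
    by simp
  also have "e powr (M + m) / e powr (2 * m) = e powr (M - m)"
    by (simp add: powr_diff[symmetric])
  finally have Pm: "\<bar>Pm k m s g\<bar> \<le> A * B / (2 ^ m * fact m) * e powr (M - m)" .
  have "\<bar>Pm k m s g * Hpoly k m s y\<bar>
      \<le> (A * B / (2 ^ m * fact m) * e powr (M - m)) * (Ch * (e powr m + \<bar>y\<bar> powr m))"
    unfolding abs_mult using Pm abs_Hpoly_le[of k m s y] unfolding e_def Ch_def
    by (intro mult_mono) auto
  also have "\<dots> = c * (e powr M + e powr (M - m) * \<bar>y\<bar> powr m)"
    unfolding c_def by (simp add: algebra_simps add_divide_distrib powr_add[symmetric])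
  also have "\<dots> \<le> c * (e powr M + (e powr M + \<bar>y\<bar> powr M))"
    using powr_mult_powr_le[OF e abs_ge_zero, of "M - m" m] mM c
    by (intro mult_left_mono add_left_mono) auto
  also have "\<dots> \<le> c * (2 * weight e M y)"
    using c unfolding weight_def by (intro mult_left_mono) auto
  also have "\<dots> = proj_const m K * A * weight e M y"
    unfolding proj_const_def c_def B_def Ch_def by (simp add: algebra_simps)
  finally show ?thesis unfolding e_def .
qed

lemma abs_Pminus_le:
  fixes g :: "real \<Rightarrow> real"
  assumes M: "0 \<le> M" and mM: "\<And>m. m \<le> Mfloor p k \<Longrightarrow> real m \<le> M"
    and K: "M + real (Mfloor p k) \<le> 2 * real K"
    and g: "g \<in> borel_measurable lborel" "\<And>y. \<bar>g y\<bar> \<le> A * weight (1 / Ifun k s) M y"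
  shows "\<bar>Pminus p k s g y\<bar> \<le> (1 + (\<Sum>m\<le>Mfloor p k. proj_const m K)) * A * weight (1 / Ifun k s) M y"
proof -
  let ?w = "weight (1 / Ifun k s) M y"
  have "\<bar>Pminus p k s g y\<bar> \<le> \<bar>g y\<bar> + (\<Sum>m\<le>Mfloor p k. \<bar>Pm k m s g * Hpoly k m s y\<bar>)"
    unfolding Pminus_def atLeast0AtMost by (rule order.trans[OF abs_triangle_ineq4 add_left_mono[OF sum_abs]])
  also have "\<dots> \<le> A * ?w + (\<Sum>m\<le>Mfloor p k. proj_const m K * A * ?w)"
  proof (intro add_mono sum_mono)
    fix m assume "m \<in> {..Mfloor p k}"
    then have m: "m \<le> Mfloor p k" by simp
    show "\<bar>Pm k m s g * Hpoly k m s y\<bar> \<le> proj_const m K * A * ?w"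
      by (rule abs_Pm_Hpoly_le[OF M mM[OF m] _ g]) (use K m in linarith)
  qed (rule g(2))
  finally show ?thesis by (simp add: algebra_simps sum_distrib_right sum_distrib_left)
qed

section \<open>Expansion of \<open>y\<^sup>2\<^sup>k e\<^sub>b(y)\<close>\<close>

lemma Mexp_gt: "1 < p \<Longrightarrow> 0 < k \<Longrightarrow> real (2 * k) < Mexp p k"
  unfolding Mexp_def by (simp add: field_simps)

lemma Mfloor_less_Mexp: "0 < Mexp p k \<Longrightarrow> real (Mfloor p k) < Mexp p k"
  and Mexp_le_Mfloor: "0 < Mexp p k \<Longrightarrow> Mexp p k \<le> real (Mfloor p k) + 1"
  unfolding Mfloor_def by (simp_all add: ceiling_less_iff[symmetric] less_ceiling_iff, linarith+)

lemma le_Mfloor: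
  assumes "real n < Mexp p k"
  shows "n \<le> Mfloor p k"
proof -
  have "int n < \<lceil>Mexp p k\<rceil>" using assms by (simp add: less_ceiling_iff)
  then show ?thesis unfolding Mfloor_def by simp
qed

lemma divide_one_plus_eq_partial_sum:
  fixes u :: real
  assumes "1 + u \<noteq> 0"
  shows "u / (1 + u) = (\<Sum>j = 1..J. (-1) ^ (j - 1) * u ^ j) + (-1) ^ J * u ^ (J + 1) / (1 + u)"
proof (induction J)
  case (Suc J)
  have "(-1) ^ J * u ^ (J + 1) / (1 + u) = (-1) ^ J * u ^ (J + 1) + (-1) ^ Suc J * u ^ (Suc J + 1) / (1 + u)"
    using assms by (simp add: field_simps)
  then show ?case using Suc by simp
qed simp

definition eb_poly :: "real \<Rightarrow> nat \<Rightarrow> real \<Rightarrow> nat \<Rightarrow> real poly" where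
  "eb_poly p k b J = smult (1 / b) (\<Sum>j = 1..J. smult ((-1) ^ (j - 1) * (b / (p - 1)) ^ j) (monom 1 (2 * k * j)))"

definition eb_remainder :: "real \<Rightarrow> nat \<Rightarrow> real \<Rightarrow> nat \<Rightarrow> real \<Rightarrow> real" where
  "eb_remainder p k b J y = (let u = b * y ^ (2 * k) / (p - 1) in (1 / b) * ((-1) ^ J * u ^ (J + 1) / (1 + u)))"

lemma degree_eb_poly: "degree (eb_poly p k b J) \<le> 2 * k * J"
  unfolding eb_poly_def
  by (rule order.trans[OF degree_smult_le], rule degree_sum_le, simp,
      rule order.trans[OF degree_smult_le], rule order.trans[OF degree_monom_le]) auto

lemma power_mult_e_b_eq:
  assumes p: "1 < p" and b: "0 < b"
  shows "y ^ (2 * k) * e_b p k b y = poly (eb_poly p k b J) y + eb_remainder p k b J y"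
proof -
  define Y where "Y = y ^ (2 * k)"
  define u where "u = b * Y / (p - 1)"
  have Y: "0 \<le> Y" unfolding Y_def by (simp add: zero_le_even_power)
  have u: "0 \<le> u" unfolding u_def using p b Y by simp
  have "Y * e_b p k b y = (1 / b) * (u / (1 + u))"
  proof -
    have "0 < p - 1 + b * Y" using p b Y by (simp add: add_pos_nonneg)
    moreover have "1 + u = (p - 1 + b * Y) / (p - 1)" unfolding u_def using p by (simp add: field_simps)
    ultimately show ?thesis unfolding e_b_def Y_def[symmetric] u_def using p b by simp
  qed
  also have "\<dots> = (1 / b) * (\<Sum>j = 1..J. (-1) ^ (j - 1) * u ^ j) + (1 / b) * ((-1) ^ J * u ^ (J + 1) / (1 + u))"
    using divide_one_plus_eq_partial_sum[of u J] u by (simp add: distrib_left)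
  also have "(\<Sum>j = 1..J. (-1) ^ (j - 1) * u ^ j) = (\<Sum>j = 1..J. (-1) ^ (j - 1) * (b / (p - 1)) ^ j * y ^ (2 * k * j))"
    unfolding u_def Y_def by (intro sum.cong refl) (simp add: power_mult_distrib power_divide power_mult)
  finally show ?thesis
    unfolding eb_poly_def eb_remainder_def Y_def u_def by (simp add: poly_sum poly_monom Let_def)
qed

lemma abs_power_mult_e_b_le:
  assumes p: "1 < p" and b: "0 < b"
  shows "\<bar>y ^ (2 * k) * e_b p k b y\<bar> \<le> 1 / b"
proof -
  define Y where "Y = y ^ (2 * k)"
  have Y: "0 \<le> Y" unfolding Y_def by (simp add: zero_le_even_power)
  have D: "0 < p - 1 + b * Y" using p b Y by (simp add: add_pos_nonneg)
  have "Y / (p - 1 + b * Y) \<le> 1 / b" using D b Y p by (simp add: divide_simps)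
  moreover have "0 \<le> Y / (p - 1 + b * Y)" using D Y by simp
  moreover have "y ^ (2 * k) * e_b p k b y = Y / (p - 1 + b * Y)" unfolding e_b_def Y_def by simp
  ultimately show ?thesis by (metis abs_of_nonneg)
qed

text \<open>The geometric tail \<open>u\<^sup>J\<^sup>+\<^sup>1/(1+u)\<close> with \<open>u = \<beta>|y|\<^sup>d\<close> is at most \<open>u\<^sup>J\<^sup>+\<^sup>1\<close> for small \<open>|y|\<close>
  and at most \<open>u\<^sup>J\<close> for large \<open>|y|\<close>; the order \<open>J\<close> is chosen so that both fit under \<open>|y|\<^sup>M\<close>.\<close>

lemma geometric_tail_le_small:
  fixes \<beta> \<beta>0 e M y :: real
  assumes \<beta>: "0 \<le> \<beta>" "\<beta> \<le> \<beta>0" and e: "0 < e" "e \<le> 1" and y: "\<bar>y\<bar> \<le> 1"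
    and d: "0 < d" and M: "M \<le> real (m + d * (J + 1))"
  shows "(\<beta> * \<bar>y\<bar> ^ d) ^ (J + 1) / (1 + \<beta> * \<bar>y\<bar> ^ d) * (e powr m + \<bar>y\<bar> powr m)
           \<le> 2 * \<beta>0 ^ (J + 1) * weight e M y"
proof -
  define D where "D = d * (J + 1)"
  define u where "u = \<beta> * \<bar>y\<bar> ^ d"
  have u: "0 \<le> u" unfolding u_def using \<beta> by simp
  have MD: "M \<le> real m + real D" using M unfolding D_def by simp
  have "u ^ (J + 1) / (1 + u) \<le> u ^ (J + 1)"
    using u divide_left_mono[of 1 "1 + u" "u ^ (J + 1)"] by simp
  also have "\<dots> = \<beta> ^ (J + 1) * \<bar>y\<bar> ^ D"
    unfolding u_def D_def by (simp only: power_mult_distrib power_mult mult.commute)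
  also have "\<dots> \<le> \<beta>0 ^ (J + 1) * \<bar>y\<bar> ^ D" using \<beta> by (intro mult_right_mono power_mono) auto
  finally have tail: "u ^ (J + 1) / (1 + u) \<le> \<beta>0 ^ (J + 1) * \<bar>y\<bar> ^ D" .
  have "e powr m * \<bar>y\<bar> ^ D \<le> e powr (real m + real D) + \<bar>y\<bar> powr (real m + real D)"
    by (rule powr_mult_power_le) (use e in auto)
  also have "\<dots> \<le> weight e M y"
    unfolding weight_def using e y MD by (intro add_mono powr_mono') auto
  finally have t1: "e powr m * \<bar>y\<bar> ^ D \<le> weight e M y" .
  have t2: "\<bar>y\<bar> ^ D * \<bar>y\<bar> powr m \<le> weight e M y"
  proof (cases "y = 0")
    case True
    then show ?thesis using d weight_pos[OF e(1), of M y] unfolding D_def by simp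
  next
    case False
    then have "\<bar>y\<bar> ^ D * \<bar>y\<bar> powr m = \<bar>y\<bar> powr (m + D)" by (simp add: powr_add powr_realpow)
    also have "\<dots> \<le> \<bar>y\<bar> powr M" using y MD by (intro powr_mono') auto
    finally show ?thesis unfolding weight_def using powr_ge_zero[of e M] by linarith
  qed
  have "u ^ (J + 1) / (1 + u) * (e powr m + \<bar>y\<bar> powr m)
      \<le> \<beta>0 ^ (J + 1) * \<bar>y\<bar> ^ D * (e powr m + \<bar>y\<bar> powr m)"
    using tail by (intro mult_right_mono) auto
  also have "\<dots> = \<beta>0 ^ (J + 1) * (e powr m * \<bar>y\<bar> ^ D + \<bar>y\<bar> ^ D * \<bar>y\<bar> powr m)"
    by (simp add: algebra_simps)
  also have "\<dots> \<le> \<beta>0 ^ (J + 1) * (2 * weight e M y)"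
    using t1 t2 \<beta> by (intro mult_left_mono) auto
  finally show ?thesis unfolding u_def by simp
qed

lemma geometric_tail_le_large:
  fixes \<beta> \<beta>0 e M y :: real
  assumes \<beta>: "0 \<le> \<beta>" "\<beta> \<le> \<beta>0" and e: "0 < e" "e \<le> 1" and y: "1 \<le> \<bar>y\<bar>"
    and M: "real (d * J + m) \<le> M"
  shows "(\<beta> * \<bar>y\<bar> ^ d) ^ (J + 1) / (1 + \<beta> * \<bar>y\<bar> ^ d) * (e powr m + \<bar>y\<bar> powr m)
           \<le> 2 * \<beta>0 ^ J * weight e M y"
proof -
  define u where "u = \<beta> * \<bar>y\<bar> ^ d"
  have u: "0 \<le> u" unfolding u_def using \<beta> by simp
  have "u ^ (J + 1) / (1 + u) = u ^ J * (u / (1 + u))" by simp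
  also have "\<dots> \<le> u ^ J" using u by (intro mult_left_le) auto
  also have "\<dots> = \<beta> ^ J * \<bar>y\<bar> ^ (d * J)"
    unfolding u_def by (simp only: power_mult_distrib power_mult)
  also have "\<dots> \<le> \<beta>0 ^ J * \<bar>y\<bar> ^ (d * J)" using \<beta> by (intro mult_right_mono power_mono) auto
  finally have tail: "u ^ (J + 1) / (1 + u) \<le> \<beta>0 ^ J * \<bar>y\<bar> ^ (d * J)" .
  have "e powr m \<le> 1" using e by (intro powr_le1) auto
  also have "1 \<le> \<bar>y\<bar> powr m" using y by (intro ge_one_powr_ge_zero) auto
  finally have em: "e powr m + \<bar>y\<bar> powr m \<le> 2 * \<bar>y\<bar> powr m" by simp
  have "\<bar>y\<bar> ^ (d * J) * \<bar>y\<bar> powr m = \<bar>y\<bar> powr (d * J + m)"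
    using y powr_realpow[of "\<bar>y\<bar>" "d * J"] by (simp add: powr_add)
  also have "\<dots> \<le> \<bar>y\<bar> powr M" using y M by (intro powr_mono) auto
  also have "\<dots> \<le> weight e M y" unfolding weight_def by simp
  finally have yw: "\<bar>y\<bar> ^ (d * J) * \<bar>y\<bar> powr m \<le> weight e M y" .
  have "u ^ (J + 1) / (1 + u) * (e powr m + \<bar>y\<bar> powr m) \<le> \<beta>0 ^ J * \<bar>y\<bar> ^ (d * J) * (2 * \<bar>y\<bar> powr m)"
    using tail em u \<beta> by (intro mult_mono) auto
  also have "\<dots> = 2 * \<beta>0 ^ J * (\<bar>y\<bar> ^ (d * J) * \<bar>y\<bar> powr m)" by (simp add: algebra_simps)
  also have "\<dots> \<le> 2 * \<beta>0 ^ J * weight e M y"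
    using yw \<beta> by (intro mult_left_mono) auto
  finally show ?thesis unfolding u_def .
qed

definition remainder_const :: "real \<Rightarrow> real \<Rightarrow> nat \<Rightarrow> nat \<Rightarrow> real" where
  "remainder_const p b0 m J = (2 / b0) * hermite_abs_coeff_sum m * 2
     * ((2 * b0 / (p - 1)) ^ (J + 1) + (2 * b0 / (p - 1)) ^ J)"

lemma abs_eb_remainder_hermite_le:
  fixes p b b0 e y M :: real
  assumes p: "1 < p" and b: "b0 / 2 \<le> b" "b \<le> 2 * b0" and b0: "0 < b0"
    and e: "0 < e" "e \<le> 1" and k: "0 < k"
    and J: "real (2 * k * J + m) \<le> M" "M \<le> real (m + 2 * k * (J + 1))"
  shows "\<bar>eb_remainder p k b J y * poly (hermite (- (e\<^sup>2)) m) y\<bar>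
           \<le> remainder_const p b0 m J * weight e M y"
proof -
  define \<beta> where "\<beta> = b / (p - 1)"
  define \<beta>0 where "\<beta>0 = 2 * b0 / (p - 1)"
  define u where "u = \<beta> * \<bar>y\<bar> ^ (2 * k)"
  define Ch where "Ch = hermite_abs_coeff_sum m"
  have bpos: "0 < b" using b0 b by linarith
  have \<beta>: "0 \<le> \<beta>" "\<beta> \<le> \<beta>0" unfolding \<beta>_def \<beta>0_def using p bpos b by (auto intro: divide_right_mono)
  have u: "0 \<le> u" unfolding u_def using \<beta> by simp
  have Ch: "0 \<le> Ch" unfolding Ch_def by (rule hermite_abs_coeff_sum_nonneg)
  have tail: "u ^ (J + 1) / (1 + u) * (e powr m + \<bar>y\<bar> powr m) \<le> 2 * (\<beta>0 ^ (J + 1) + \<beta>0 ^ J) * weight e M y"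
  proof -
    have w: "0 \<le> \<beta>0 ^ J * weight e M y" "0 \<le> \<beta>0 ^ (J + 1) * weight e M y"
      using \<beta> weight_pos[OF e(1), of M y] by auto
    consider "\<bar>y\<bar> \<le> 1" | "1 \<le> \<bar>y\<bar>" by linarith
    then have "u ^ (J + 1) / (1 + u) * (e powr m + \<bar>y\<bar> powr m) \<le> 2 * \<beta>0 ^ (J + 1) * weight e M y
        \<or> u ^ (J + 1) / (1 + u) * (e powr m + \<bar>y\<bar> powr m) \<le> 2 * \<beta>0 ^ J * weight e M y"
    proof cases
      case 1
      show ?thesis unfolding u_def
        by (intro disjI1 geometric_tail_le_small[OF \<beta> e 1]) (use k J(2) in auto)
    next
      case 2
      show ?thesis unfolding u_def
        by (intro disjI2 geometric_tail_le_large[OF \<beta> e 2]) (use J(1) in auto)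
    qed
    then show ?thesis using w by (auto simp: algebra_simps)
  qed
  have "\<bar>eb_remainder p k b J y * poly (hermite (- (e\<^sup>2)) m) y\<bar>
      = (1 / b) * (u ^ (J + 1) / (1 + u)) * \<bar>poly (hermite (- (e\<^sup>2)) m) y\<bar>"
    unfolding eb_remainder_def Let_def u_def \<beta>_def using bpos p
    by (simp add: abs_mult abs_divide power_abs power_even_abs add_nonneg_nonneg zero_le_even_power)
  also have "\<dots> \<le> (2 / b0) * (u ^ (J + 1) / (1 + u)) * (Ch * (e powr m + \<bar>y\<bar> powr m))"
    using abs_poly_hermite_le[OF e(1), of m y] b b0 bpos u unfolding Ch_def
    by (intro mult_mono) (auto simp: field_simps)
  also have "\<dots> = (2 / b0) * Ch * (u ^ (J + 1) / (1 + u) * (e powr m + \<bar>y\<bar> powr m))"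
    by (simp add: ac_simps)
  also have "\<dots> \<le> (2 / b0) * Ch * (2 * (\<beta>0 ^ (J + 1) + \<beta>0 ^ J) * weight e M y)"
    using tail b0 Ch by (intro mult_left_mono) auto
  also have "\<dots> = remainder_const p b0 m J * weight e M y"
    unfolding remainder_const_def \<beta>0_def Ch_def by (simp add: ac_simps)
  finally show ?thesis .
qed

section \<open>The nonlinear term \<open>\<M>(q)\<close>\<close>

lemma mult_div_add_bounds:
  fixes m N d :: nat
  assumes "m \<le> N" "0 < d"
  shows "d * ((N - m) div d) + m \<le> N" "N + 1 \<le> d * ((N - m) div d + 1) + m"
proof -
  have "d * ((N - m) div d) + (N - m) mod d = N - m" by (rule mult_div_mod_eq)
  moreover have "(N - m) mod d < d" using assms by simp
  ultimately show "d * ((N - m) div d) + m \<le> N" "N + 1 \<le> d * ((N - m) div d + 1) + m"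
    using assms by (simp_all add: algebra_simps, linarith+)
qed

text \<open>The \<open>m\<close>-th Hermite mode of \<open>q\<close> is multiplied by the expansion of \<open>y\<^sup>2\<^sup>k e\<^sub>b\<close> up to the
  largest order \<open>J\<close> that keeps the polynomial part of degree \<open>\<le> [M]\<close>.\<close>

definition eb_order :: "real \<Rightarrow> nat \<Rightarrow> nat \<Rightarrow> nat" where
  "eb_order p k m = (Mfloor p k - m) div (2 * k)"

lemma eb_order_bounds:
  assumes p: "1 < p" and k: "0 < k" and m: "m \<le> Mfloor p k"
  shows "2 * k * eb_order p k m + m \<le> Mfloor p k"
    and "real (2 * k * eb_order p k m + m) \<le> Mexp p k"
    and "Mexp p k \<le> real (m + 2 * k * (eb_order p k m + 1))"
proof -
  have M: "0 < Mexp p k" using Mexp_gt[OF p k] by linarith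
  note J = mult_div_add_bounds[OF m, of "2 * k"]
  show "2 * k * eb_order p k m + m \<le> Mfloor p k"
    using J(1) k unfolding eb_order_def by simp
  then show "real (2 * k * eb_order p k m + m) \<le> Mexp p k"
    using Mfloor_less_Mexp[OF M] by linarith
  have "real (Mfloor p k + 1) \<le> real (2 * k * (eb_order p k m + 1) + m)"
    using J(2) k unfolding eb_order_def of_nat_le_iff by simp
  then show "Mexp p k \<le> real (m + 2 * k * (eb_order p k m + 1))"
    using Mexp_le_Mfloor[OF M] by simp
qed

definition Mcal_const :: "real \<Rightarrow> nat \<Rightarrow> real \<Rightarrow> real" where
  "Mcal_const p k b0 = p / (p - 1) * (2 / b0)
     + (\<Sum>m\<le>Mfloor p k. p / (p - 1) * remainder_const p b0 m (eb_order p k m))"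

definition Pminus_Mcal_const :: "real \<Rightarrow> nat \<Rightarrow> real \<Rightarrow> real" where
  "Pminus_Mcal_const p k b0 = (1 + (\<Sum>m\<le>Mfloor p k. proj_const m (Mfloor p k + 1))) * Mcal_const p k b0"

lemma Vset_bounds:
  assumes V: "(q, b) \<in> Vset p k \<delta> b0 s" and s: "0 \<le> s" and k: "0 < k" and \<delta>: "0 \<le> \<delta>"
  shows "q \<in> borel_measurable lborel"
    and "\<And>m. m \<le> Mfloor p k \<Longrightarrow> \<bar>Pm k m s q\<bar> \<le> Ifun k s powr (- \<delta>)"
    and "\<And>y. \<bar>Pminus p k s q y\<bar> \<le> Ifun k s powr (- \<delta>) * weight (1 / Ifun k s) (Mexp p k) y"
    and "b0 / 2 \<le> b" "b \<le> 2 * b0"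
proof -
  have I: "1 \<le> Ifun k s" using s k by (intro one_le_Ifun) auto
  from V show "q \<in> borel_measurable lborel" "b0 / 2 \<le> b" "b \<le> 2 * b0"
    unfolding Vset_def admissible_def by auto
  fix m assume m: "m \<le> Mfloor p k"
  show "\<bar>Pm k m s q\<bar> \<le> Ifun k s powr (- \<delta>)"
  proof (cases "m = 2 * k")
    case True
    have "Ifun k s powr (- 2 * \<delta>) \<le> Ifun k s powr (- \<delta>)" using I \<delta> by (intro powr_mono) auto
    then show ?thesis using V True unfolding Vset_def by auto
  next
    case False
    then show ?thesis using V m unfolding Vset_def by auto
  qed
next
  fix y
  have "wnorm p k s (Pminus p k s q) \<le> ereal (Ifun k s powr (- \<delta>))"
    using V unfolding Vset_def by auto
  then have "\<bar>Pminus p k s q y\<bar> / weight (1 / Ifun k s) (Mexp p k) y \<le> Ifun k s powr (- \<delta>)"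
    unfolding wnorm_def weight_Ifun by (simp add: SUP_le_iff)
  then show "\<bar>Pminus p k s q y\<bar> \<le> Ifun k s powr (- \<delta>) * weight (1 / Ifun k s) (Mexp p k) y"
    using weight_pos[of "1 / Ifun k s" "Mexp p k" y] Ifun_pos[of k s] by (simp add: divide_le_eq)
qed

definition Mcal_poly :: "real \<Rightarrow> nat \<Rightarrow> real \<Rightarrow> real \<Rightarrow> (real \<Rightarrow> real) \<Rightarrow> real poly" where
  "Mcal_poly p k b s q = smult (p / (p - 1)) (monom 1 (2 * k))
     + (\<Sum>m\<le>Mfloor p k. smult (p / (p - 1) * Pm k m s q)
          (eb_poly p k b (eb_order p k m) * hermite (hermite_param k s) m))"

definition Mcal_rest :: "real \<Rightarrow> nat \<Rightarrow> real \<Rightarrow> real \<Rightarrow> (real \<Rightarrow> real) \<Rightarrow> real \<Rightarrow> real" where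
  "Mcal_rest p k b s q y = p / (p - 1) * (y ^ (2 * k) * e_b p k b y) * Pminus p k s q y
     + (\<Sum>m\<le>Mfloor p k. p / (p - 1) * Pm k m s q * (eb_remainder p k b (eb_order p k m) y * Hpoly k m s y))"

lemma Mcal_eq_poly_plus_rest:
  assumes p: "1 < p" and b: "0 < b"
  shows "Mcal p k b q y = poly (Mcal_poly p k b s q) y + Mcal_rest p k b s q y"
proof -
  define c where "c = p / (p - 1)"
  have "q y = Pminus p k s q y + (\<Sum>m\<le>Mfloor p k. Pm k m s q * Hpoly k m s y)"
    unfolding Pminus_def by (simp add: atLeast0AtMost)
  then have "Mcal p k b q y = c * y ^ (2 * k) + c * (y ^ (2 * k) * e_b p k b y) * Pminus p k s q y
      + (\<Sum>m\<le>Mfloor p k. c * Pm k m s q * (y ^ (2 * k) * e_b p k b y * Hpoly k m s y))"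
    unfolding Mcal_def c_def[symmetric] by (simp add: algebra_simps sum_distrib_left)
  also have "\<dots> = poly (Mcal_poly p k b s q) y + Mcal_rest p k b s q y"
  proof -
    have "y ^ (2 * k) * e_b p k b y * Hpoly k m s y
        = poly (eb_poly p k b (eb_order p k m) * hermite (hermite_param k s) m) y
          + eb_remainder p k b (eb_order p k m) y * Hpoly k m s y" for m
      using power_mult_e_b_eq[OF p b, of y k "eb_order p k m"]
      unfolding Hpoly_eq_hermite by (simp add: algebra_simps)
    then show ?thesis
      unfolding Mcal_poly_def Mcal_rest_def c_def[symmetric]
      by (simp add: poly_sum poly_monom algebra_simps sum.distrib)
  qed
  finally show ?thesis .
qed

lemma degree_Mcal_poly:
  assumes p: "1 < p" and k: "0 < k"
  shows "degree (Mcal_poly p k b s q) \<le> Mfloor p k"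
proof -
  have "degree (smult (p / (p - 1)) (monom 1 (2 * k)) :: real poly) \<le> Mfloor p k"
    using le_Mfloor[OF Mexp_gt[OF p k]]
    by (intro order.trans[OF degree_smult_le] order.trans[OF degree_monom_le]) auto
  moreover have "degree (smult (p / (p - 1) * Pm k m s q)
      (eb_poly p k b (eb_order p k m) * hermite (hermite_param k s) m)) \<le> Mfloor p k"
    if "m \<le> Mfloor p k" for m
    using degree_mult_le[of "eb_poly p k b (eb_order p k m)" "hermite (hermite_param k s) m"]
      degree_eb_poly[of p k b "eb_order p k m"] eb_order_bounds(1)[OF p k that]
    by (auto intro: order.trans[OF degree_smult_le])
  ultimately show ?thesis unfolding Mcal_poly_def by (intro degree_add_le degree_sum_le) auto
qed

lemma borel_measurable_Mcal_rest:
  assumes "q \<in> borel_measurable lborel"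
  shows "Mcal_rest p k b s q \<in> borel_measurable lborel"
proof -
  have [measurable]: "q \<in> borel_measurable borel" using assms by simp
  show ?thesis
    unfolding Mcal_rest_def[abs_def] eb_remainder_def Pminus_def e_b_def Let_def by measurable
qed

lemma abs_Mcal_rest_le:
  assumes p: "1 < p" and k: "0 < k" and b0: "0 < b0" and b: "b0 / 2 \<le> b" "b \<le> 2 * b0"
    and s: "0 \<le> s"
    and qm: "\<And>m. m \<le> Mfloor p k \<Longrightarrow> \<bar>Pm k m s q\<bar> \<le> \<eta>"
    and q_minus: "\<And>y. \<bar>Pminus p k s q y\<bar> \<le> \<eta> * weight (1 / Ifun k s) (Mexp p k) y"
  shows "\<bar>Mcal_rest p k b s q y\<bar> \<le> \<eta> * Mcal_const p k b0 * weight (1 / Ifun k s) (Mexp p k) y"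
proof -
  define N where "N = Mfloor p k"
  define e where "e = 1 / Ifun k s"
  define w where "w = weight e (Mexp p k) y"
  define c where "c = p / (p - 1)"
  have bpos: "0 < b" using b0 b by linarith
  have e: "0 < e" "e \<le> 1" unfolding e_def using one_le_Ifun[OF s, of k] k Ifun_pos[of k s] by auto
  have c: "0 \<le> c" unfolding c_def using p by simp
  have \<eta>: "0 \<le> \<eta>" using qm[of 0] by linarith
  have "\<bar>c * (y ^ (2 * k) * e_b p k b y) * Pminus p k s q y\<bar> \<le> c * ((2 / b0) * (\<eta> * w))"
  proof -
    have "\<bar>y ^ (2 * k) * e_b p k b y\<bar> \<le> 2 / b0"
    proof (rule order.trans[OF abs_power_mult_e_b_le[OF p bpos]])
      show "1 / b \<le> 2 / b0" using b b0 bpos by (simp add: field_simps)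
    qed
    then have "\<bar>y ^ (2 * k) * e_b p k b y\<bar> * \<bar>Pminus p k s q y\<bar> \<le> (2 / b0) * (\<eta> * w)"
      using q_minus[of y] b0 unfolding w_def e_def by (intro mult_mono) auto
    then have "c * (\<bar>y ^ (2 * k) * e_b p k b y\<bar> * \<bar>Pminus p k s q y\<bar>) \<le> c * ((2 / b0) * (\<eta> * w))"
      by (rule mult_left_mono[OF _ c])
    then show ?thesis by (simp only: abs_mult abs_of_nonneg[OF c] mult.assoc)
  qed
  moreover have "\<bar>c * Pm k m s q * (eb_remainder p k b (eb_order p k m) y * Hpoly k m s y)\<bar>
      \<le> c * remainder_const p b0 m (eb_order p k m) * (\<eta> * w)" if m: "m \<le> N" for m
  proof -
    let ?R = "eb_remainder p k b (eb_order p k m) y * Hpoly k m s y"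
    have "\<bar>?R\<bar> \<le> remainder_const p b0 m (eb_order p k m) * w"
      unfolding w_def Hpoly_eq_hermite hermite_param_eq e_def[symmetric]
      using eb_order_bounds[OF p k m[unfolded N_def]]
      by (intro abs_eb_remainder_hermite_le[OF p b b0 e k]) auto
    then have "\<bar>Pm k m s q\<bar> * \<bar>?R\<bar> \<le> \<eta> * (remainder_const p b0 m (eb_order p k m) * w)"
      using qm[of m] m \<eta> unfolding N_def by (intro mult_mono) auto
    then have "c * (\<bar>Pm k m s q\<bar> * \<bar>?R\<bar>) \<le> c * (\<eta> * (remainder_const p b0 m (eb_order p k m) * w))"
      by (rule mult_left_mono[OF _ c])
    then show ?thesis by (simp only: abs_mult abs_of_nonneg[OF c] ac_simps)
  qed
  ultimately have "\<bar>Mcal_rest p k b s q y\<bar> \<le> c * ((2 / b0) * (\<eta> * w))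
      + (\<Sum>m\<le>N. c * remainder_const p b0 m (eb_order p k m) * (\<eta> * w))"
    unfolding Mcal_rest_def c_def[symmetric] N_def[symmetric]
    by (intro order.trans[OF abs_triangle_ineq add_mono[OF _ order.trans[OF sum_abs sum_mono]]]) auto
  also have "\<dots> = \<eta> * Mcal_const p k b0 * w"
    unfolding Mcal_const_def c_def N_def by (simp add: algebra_simps sum_distrib_left sum_distrib_right)
  finally show ?thesis unfolding w_def e_def .
qed

lemma abs_Pminus_Mcal_le:
  assumes p: "1 < p" and k: "0 < k" and b0: "0 < b0" and s: "0 \<le> s" and \<delta>: "0 \<le> \<delta>"
    and V: "(q, b) \<in> Vset p k \<delta> b0 s"
  shows "\<bar>Pminus p k s (Mcal p k b q) y\<bar>
           \<le> Pminus_Mcal_const p k b0 * Ifun k s powr (- \<delta>) * weight (1 / Ifun k s) (Mexp p k) y"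
proof -
  have M_pos: "0 < Mexp p k" using Mexp_gt[OF p k] by linarith
  then have M: "0 \<le> Mexp p k" by simp
  have mM: "real m \<le> Mexp p k" if "m \<le> Mfloor p k" for m
    using that Mfloor_less_Mexp[OF M_pos] by linarith
  have K: "Mexp p k + real (Mfloor p k) \<le> 2 * real (Mfloor p k + 1)"
    using Mfloor_less_Mexp[OF M_pos] Mexp_le_Mfloor[OF M_pos] by simp
  note bounds = Vset_bounds[OF V s k \<delta>]
  have bpos: "0 < b" using b0 bounds(4) by linarith
  define G where "G = Mcal_poly p k b s q"
  define F where "F = Mcal_rest p k b s q"
  have F_meas: "F \<in> borel_measurable lborel"
    unfolding F_def by (rule borel_measurable_Mcal_rest[OF bounds(1)])
  have F_bound: "\<bar>F x\<bar> \<le> Ifun k s powr (- \<delta>) * Mcal_const p k b0 * weight (1 / Ifun k s) (Mexp p k) x"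
    for x unfolding F_def by (rule abs_Mcal_rest_le[OF p k b0 bounds(4,5) s]) (use bounds(2,3) in auto)
  have "Mcal p k b q = (\<lambda>y. poly G y + F y)"
    using Mcal_eq_poly_plus_rest[OF p bpos] unfolding G_def F_def by (simp add: fun_eq_iff)
  then have "Pminus p k s (Mcal p k b q) y = Pminus p k s (\<lambda>y. poly G y + F y) y" by simp
  also have "\<dots> = Pminus p k s (poly G) y + Pminus p k s F y"
  proof (rule Pminus_add)
    fix m assume m: "m \<le> Mfloor p k"
    show "integrable lborel (\<lambda>y. poly G y * Hpoly k m s y * rho k s y)"
      by (rule integrable_poly_Hpoly_rho)
    show "integrable lborel (\<lambda>y. F y * Hpoly k m s y * rho k s y)"
      by (rule inner_rho_Hpoly_weighted(1)[OF M _ F_meas F_bound, where K = "Mfloor p k + 1"])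
        (use K m in simp)
  qed
  finally have "\<bar>Pminus p k s (Mcal p k b q) y\<bar> = \<bar>Pminus p k s F y\<bar>"
    using Pminus_poly_eq_0[OF degree_Mcal_poly[OF p k]] unfolding G_def by simp
  also have "\<dots> \<le> Pminus_Mcal_const p k b0 * Ifun k s powr (- \<delta>) * weight (1 / Ifun k s) (Mexp p k) y"
    using abs_Pminus_le[OF M mM K F_meas F_bound] unfolding Pminus_Mcal_const_def by (simp add: ac_simps)
  finally show ?thesis .
qed

theorem mainTheorem15:
  fixes p b0 :: real and k :: nat
  assumes "p > 1" and "k \<ge> 2" and "b0 > 0"
  shows "\<exists>\<delta>11 > 0. \<forall>\<delta>. 0 < \<delta> \<and> \<delta> < \<delta>11 \<longrightarrow>
    (\<exists>s11 \<ge> 1. \<exists>C. \<forall>s0 \<ge> s11. \<forall>sbar :: real. \<forall>(q :: real \<Rightarrow> real \<Rightarrow> real) (b :: real \<Rightarrow> real).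
       (\<forall>s \<in> {s0..sbar}. (q s, b s) \<in> Vset p k \<delta> b0 s) \<longrightarrow>
       (\<forall>s \<in> {s0..sbar}. \<forall>y :: real.
          \<bar>Pminus p k s (Mcal p k (b s) (q s)) y\<bar>
            \<le> C * Ifun k s powr (- \<delta>) * (Ifun k s powr (- Mexp p k) + \<bar>y\<bar> powr Mexp p k)))"
proof -
  have bound: "\<bar>Pminus p k s (Mcal p k (b s) (q s)) y\<bar>
      \<le> Pminus_Mcal_const p k b0 * Ifun k s powr (- \<delta>) * (Ifun k s powr (- Mexp p k) + \<bar>y\<bar> powr Mexp p k)"
    if "0 < \<delta>" "1 \<le> s0" "\<forall>s \<in> {s0..sbar}. (q s, b s) \<in> Vset p k \<delta> b0 s" "s \<in> {s0..sbar}"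
    for \<delta> s0 sbar q b s y
  proof -
    have "(q s, b s) \<in> Vset p k \<delta> b0 s" "0 \<le> s" using that by auto
    from abs_Pminus_Mcal_le[OF assms(1) _ assms(3) this(2) _ this(1)] assms(2) that(1)
    show ?thesis unfolding weight_Ifun by simp
  qed
  \<comment> \<open>The estimate holds for every \<open>\<delta> \<ge> 0\<close> and \<open>s \<ge> 0\<close>, so \<open>\<delta>\<^sub>1\<^sub>1 = s\<^sub>1\<^sub>1 = 1\<close> will do.\<close>
  show ?thesis
    by (rule exI[of _ 1], simp, intro allI impI, rule exI[of _ 1], simp,
        rule exI[of _ "Pminus_Mcal_const p k b0"]) (auto intro: bound)
qed

end
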